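(* Let $\Theta\subseteq\mathbb{R}^d$ be a $C^3$ hypersurface for which there exists $\varepsilon_0>0$ such that every $x\in\mathbb{R}^d$ with $d(x,\Theta)<\varepsilon_0$ has a unique point $p\in\Theta$ with $\|x-p\|=d(x,\Theta)$. Then for all $x,y\in\mathbb{R}^d$ and $\eta>0$ there exists a continuous curve $\gamma$ from $x$ to $y$ with $\ell(\gamma)<\|x-y\|+\eta$ such that $\gamma$ intersects $\Theta$ in only finitely many points.
   Context: A hypersurface is a $(d-1)$-dimensional submanifold of $\mathbb{R}^d$. $d(x,\Theta)=\inf_{y\in\Theta}\|x-y\|$. Length of a continuous curve $\gamma:[0,1]\to\mathbb{R}^d$: $\ell(\gamma)=\sup\sum_k\|\gamma(t_k)-\gamma(t_{k-1})\|$ over partitions of $[0,1]$. *)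

theory Defs
  imports "HOL-Analysis.Analysis"
begin

fun Ck_on :: "nat \<Rightarrow> 'a::euclidean_space set \<Rightarrow> ('a \<Rightarrow> 'b::real_normed_vector) \<Rightarrow> bool" where
  "Ck_on 0 U f = continuous_on U f"
| "Ck_on (Suc k) U f =
     (\<exists>f'. (\<forall>x\<in>U. (f has_derivative f' x) (at x)) \<and> (\<forall>i\<in>Basis. Ck_on k U (\<lambda>x. f' x i)))"

definition Ck_diffeo :: "nat \<Rightarrow> 'a::euclidean_space set \<Rightarrow> 'a set \<Rightarrow> ('a \<Rightarrow> 'a) \<Rightarrow> bool" where
  "Ck_diffeo k U V \<phi> \<longleftrightarrow> open U \<and> open V \<and>
     (\<exists>\<psi>. Ck_on k U \<phi> \<and> Ck_on k V \<psi> \<and> \<phi> ` U = V \<and>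
          (\<forall>x\<in>U. \<psi> (\<phi> x) = x) \<and> (\<forall>y\<in>V. \<phi> (\<psi> y) = y))"

text \<open>A C^k hypersurface (embedded submanifold of codimension one) of the
  Euclidean space 'a (= R^d with d = DIM('a)): every point has a C^k slice chart
  flattening the set onto a coordinate hyperplane.\<close>
definition Ck_hypersurface :: "nat \<Rightarrow> 'a::euclidean_space set \<Rightarrow> bool" where
  "Ck_hypersurface k \<Theta> \<longleftrightarrow>
     (\<forall>p\<in>\<Theta>. \<exists>U V \<phi> b. p \<in> U \<and> Ck_diffeo k U V \<phi> \<and> b \<in> Basis \<and>
                     \<phi> ` (U \<inter> \<Theta>) = V \<inter> {z. z \<bullet> b = 0})"

definition curve_length :: "(real \<Rightarrow> 'a::real_normed_vector) \<Rightarrow> ereal" where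
  "curve_length \<gamma> = (SUP (n, t) \<in> {(n, t). t 0 = 0 \<and> t n = 1 \<and> (\<forall>k<n. t k \<le> t (Suc k))}.
       ereal (\<Sum>k\<in>{1..n}. norm (\<gamma> (t k) - \<gamma> (t (k - 1)))))"

end

theory Submission
  imports Defs
begin

text \<open>If the segment from x to z meets \<Theta> in infinitely many points, these accumulate
  at some q \<in> \<Theta>. In a chart flattening \<Theta> onto a hyperplane, either q = x and z - x is
  tangent to \<Theta> at x, so z lies in a hyperplane; or q \<noteq> x and z is a critical value of the
  cone map (a, t) \<mapsto> x + t (\<psi> a - x), so z lies in a null set by Sard's theorem. Covering
  \<Theta> by countably many charts, almost every z has both [x, z] and [z, y] meeting \<Theta> finitely,
  and choosing z near the midpoint of x and y makes the broken line x, z, y nearly as short as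
  the segment. The nearest-point hypothesis is only needed to see that \<Theta> is closed.\<close>

text \<open>The library's Sard theorem lives on real^'n for a finite wellordered index type 'n;
  this index type of cardinality DIM('a) transports it to an arbitrary Euclidean space.\<close>

typedef (overloaded) ('a::euclidean_space) coord = "{..<DIM('a)}"
  morphisms coord_index Abs_coord
  using DIM_positive by blast

lemma UNIV_coord: "(UNIV :: 'a::euclidean_space coord set) = Abs_coord ` {..<DIM('a)}"
  by (metis type_definition.Abs_image type_definition_coord)

instance coord :: (euclidean_space) finite
  by standard (simp add: UNIV_coord)

lemma CARD_coord: "CARD('a::euclidean_space coord) = DIM('a)"
  using type_definition.card[OF type_definition_coord] by simp

instantiation coord :: (euclidean_space) linorder
begin
definition less_eq_coord :: "'a coord \<Rightarrow> 'a coord \<Rightarrow> bool"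
  where "i \<le> j \<longleftrightarrow> coord_index i \<le> coord_index j"
definition less_coord :: "'a coord \<Rightarrow> 'a coord \<Rightarrow> bool"
  where "i < j \<longleftrightarrow> coord_index i < coord_index j"
instance
  by standard (auto simp: less_eq_coord_def less_coord_def coord_index_inject[symmetric])
end

instance coord :: (euclidean_space) wellorder
proof
  fix P :: "'a coord \<Rightarrow> bool" and i :: "'a coord"
  assume step: "\<And>i. (\<And>j. j < i \<Longrightarrow> P j) \<Longrightarrow> P i"
  show "P i"
    by (induction i rule: measure_induct_rule[of coord_index]) (rule step, simp add: less_coord_def)
qed

lemma baby_Sard_euclidean:
  fixes f :: "'a::euclidean_space \<Rightarrow> 'a"
  assumes der: "\<And>x. x \<in> S \<Longrightarrow> (f has_derivative f' x) (at x within S)"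
    and noninj: "\<And>x. x \<in> S \<Longrightarrow> \<not> inj (f' x)"
  shows "negligible (f ` S)"
proof -
  obtain e :: "'a \<Rightarrow> real^'a coord" and e' where e: "linear e" "linear e'"
    and e'_e: "\<And>x. e' (e x) = x"
  proof -
    have "DIM('a) = DIM(real^'a coord)" by (simp add: CARD_coord)
    then show thesis
      by (rule isomorphisms_UNIV_UNIV) (rule that)
  qed
  define F where "F = e \<circ> (f \<circ> e')"
  define F' where "F' = (\<lambda>v. e \<circ> (f' (e' v) \<circ> e'))"
  have F_deriv: "(F has_derivative F' v) (at v within e ` S)" if "v \<in> e ` S" for v
  proof -
    have "e' v \<in> S" using that e'_e by auto
    have "e' ` e ` S = S" by (simp add: image_image e'_e)
    then have "(f \<circ> e' has_derivative f' (e' v) \<circ> e') (at v within e ` S)"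
      using der[OF \<open>e' v \<in> S\<close>] by (intro diff_chain_within linear_imp_has_derivative e(2)) simp
    then show ?thesis
      unfolding F_def F'_def by (rule diff_chain_within[OF _ linear_imp_has_derivative[OF e(1)]])
  qed
  have "rank (matrix (F' v)) < CARD('a coord)" if "v \<in> e ` S" for v
  proof -
    have "linear (F' v)" using F_deriv[OF that] has_derivative_linear by blast
    then have "(*v) (matrix (F' v)) = F' v" by (simp add: fun_eq_iff matrix_works)
    moreover have "\<not> inj (F' v)"
    proof
      assume "inj (F' v)"
      then have "inj (f' (e' v))"
        unfolding F'_def inj_def by (metis comp_apply e'_e)
      then show False using noninj that e'_e by auto
    qed
    ultimately show ?thesis
      by (simp add: less_rank_noninjective)
  qed
  then have "negligible (F ` e ` S)"
    by (intro baby_Sard[OF order_refl F_deriv])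
  then have "negligible (e' ` F ` e ` S)"
    using negligible_differentiable_image_negligible[of "F ` e ` S" e']
    by (simp add: CARD_coord linear_imp_differentiable_on e(2))
  moreover have "e' ` F ` e ` S = f ` S"
    by (auto simp: F_def image_image e'_e)
  ultimately show ?thesis by simp
qed

lemma has_derivative_inj_not_islimpt_fibre:
  fixes G :: "'a::real_normed_vector \<Rightarrow> 'b::euclidean_space"
  assumes G: "(G has_derivative G') (at w)" and inj: "inj G'"
  shows "\<not> w islimpt {v. G v = G w}"
proof
  assume limpt: "w islimpt {v. G v = G w}"
  obtain B where B: "B > 0" "\<And>h. B * norm h \<le> norm (G' h)"
    using linear_inj_bounded_below_pos[OF has_derivative_linear[OF G] inj] by blast
  obtain d where "d > 0" and d: "\<And>v. norm (v - w) < d \<Longrightarrow>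
      norm (G v - G w - G' (v - w)) \<le> B / 2 * norm (v - w)"
    using G \<open>B > 0\<close> unfolding has_derivative_at_alt by (meson half_gt_zero)
  obtain v where "G v = G w" "v \<noteq> w" "dist v w < d"
    using limpt \<open>d > 0\<close> unfolding islimpt_approachable by blast
  then have "norm (G' (v - w)) \<le> B / 2 * norm (v - w)" and "norm (v - w) > 0"
    using d[of v] by (simp_all add: dist_norm)
  moreover have "B / 2 * norm (v - w) < B * norm (v - w)"
    using B(1) \<open>norm (v - w) > 0\<close> by simp
  ultimately show False using B(2)[of "v - w"] by linarith
qed

corollary DERIV_zero_if_islimpt_fibre:
  fixes g :: "real \<Rightarrow> real"
  assumes "(g has_real_derivative D) (at a)" and "a islimpt {s. g s = g a}"
  shows "D = 0"
proof (rule ccontr)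
  assume "D \<noteq> 0"
  then have "inj ((*) D)" by (simp add: inj_on_def)
  with assms show False
    using has_derivative_inj_not_islimpt_fibre has_field_derivative_imp_has_derivative by blast
qed

lemma closed_segment_line_point:
  assumes "y \<in> closed_segment x z"
  obtains s where "y = x + s *\<^sub>R (z - x)"
proof -
  obtain u where "y = (1 - u) *\<^sub>R x + u *\<^sub>R z"
    using assms by (auto simp: in_segment)
  then show thesis by (intro that[of u]) (simp add: algebra_simps)
qed

lemma islimpt_segment_parameter:
  fixes x z :: "'a::real_normed_vector"
  assumes "x + s0 *\<^sub>R (z - x) islimpt (closed_segment x z \<inter> T)"
  shows "s0 islimpt {s. x + s *\<^sub>R (z - x) \<in> T}"
proof (cases "z = x")
  case True
  then show ?thesis using assms by (simp add: islimpt_approachable)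
next
  case False
  show ?thesis
    unfolding islimpt_approachable
  proof (intro allI impI)
    fix e :: real assume "e > 0"
    then obtain y where y: "y \<in> closed_segment x z \<inter> T" "y \<noteq> x + s0 *\<^sub>R (z - x)"
        "dist y (x + s0 *\<^sub>R (z - x)) < e * norm (z - x)"
      using assms False unfolding islimpt_approachable by (meson zero_less_mult_iff zero_less_norm_iff right_minus_eq)
    then obtain s where s: "y = x + s *\<^sub>R (z - x)"
      using closed_segment_line_point by (meson IntD1)
    have "dist y (x + s0 *\<^sub>R (z - x)) = dist s s0 * norm (z - x)"
      by (simp add: s dist_norm dist_real_def flip: scaleR_diff_left)
    then show "\<exists>s'\<in>{s. x + s *\<^sub>R (z - x) \<in> T}. s' \<noteq> s0 \<and> dist s' s0 < e"
      using y s False by (intro bexI[of _ s]) auto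
  qed
qed

lemma negligible_preimage_hyperplane:
  fixes f :: "'a::euclidean_space \<Rightarrow> 'a"
  assumes "linear f" "surj f" "b \<noteq> 0"
  shows "negligible {z. f (z - x) \<bullet> b = 0}"
proof -
  define a where "a = adjoint f b"
  have adj: "f h \<bullet> b = h \<bullet> a" for h
    using adjoint_works[OF assms(1)] by (simp add: a_def)
  obtain h where "f h = b" using assms(2) by (metis surjD)
  then have "a \<noteq> 0" using adj[of h] assms(3) by auto
  moreover have "f (z - x) \<bullet> b = a \<bullet> z - a \<bullet> x" for z
    using adj[of "z - x"] by (simp add: inner_diff_right inner_commute)
  ultimately show ?thesis by (simp add: negligible_hyperplane)
qed

definition hyperplane_proj :: "'a::real_inner \<Rightarrow> 'a \<Rightarrow> 'a" where
  "hyperplane_proj b w = w - (w \<bullet> b) *\<^sub>R b"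

lemma inner_hyperplane_proj: "b \<bullet> b = 1 \<Longrightarrow> hyperplane_proj b w \<bullet> b = 0"
  by (simp add: hyperplane_proj_def inner_diff_left)

lemma hyperplane_proj_id: "w \<bullet> b = 0 \<Longrightarrow> hyperplane_proj b w = w"
  by (simp add: hyperplane_proj_def)

locale flattening_chart =
  fixes \<Theta> U V :: "'a::euclidean_space set" and \<phi> \<psi> :: "'a \<Rightarrow> 'a" and \<phi>' \<psi>' :: "'a \<Rightarrow> 'a \<Rightarrow> 'a" and b :: 'a
  assumes open_U: "open U"
    and \<phi>_deriv: "\<And>u. u \<in> U \<Longrightarrow> (\<phi> has_derivative \<phi>' u) (at u)"
    and \<psi>_deriv: "\<And>v. v \<in> V \<Longrightarrow> (\<psi> has_derivative \<psi>' v) (at v)"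
    and \<phi>_into: "\<And>u. u \<in> U \<Longrightarrow> \<phi> u \<in> V"
    and \<psi>_\<phi>: "\<And>u. u \<in> U \<Longrightarrow> \<psi> (\<phi> u) = u"
    and b_Basis: "b \<in> Basis"
    and flat: "\<And>u. u \<in> U \<inter> \<Theta> \<Longrightarrow> \<phi> u \<bullet> b = 0"
begin

lemma b_unit: "b \<bullet> b = 1"
  using b_Basis by simp

lemma surj_\<phi>':
  assumes "u \<in> U"
  shows "surj (\<phi>' u)"
proof -
  have "((\<psi> \<circ> \<phi>) has_derivative (\<psi>' (\<phi> u) \<circ> \<phi>' u)) (at u)"
    using assms by (intro diff_chain_at \<phi>_deriv \<psi>_deriv \<phi>_into)
  then have "(id has_derivative (\<psi>' (\<phi> u) \<circ> \<phi>' u)) (at u)"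
    by (rule has_derivative_transform_within_open[OF _ open_U assms]) (simp add: \<psi>_\<phi>)
  then have "\<psi>' (\<phi> u) \<circ> \<phi>' u = id"
    using has_derivative_id has_derivative_unique unfolding id_def by blast
  then have "inj (\<phi>' u)" by (metis inj_on_id inj_on_imageI2)
  then show ?thesis
    using linear_injective_imp_surjective has_derivative_linear[OF \<phi>_deriv[OF assms]] by blast
qed

text \<open>The cone over \<psi> with apex x, in the coordinates a = hyperplane_proj b w of the chart
  and height t = w \<bullet> b.\<close>

definition cone :: "'a \<Rightarrow> 'a \<Rightarrow> 'a" where
  "cone x w = x + (w \<bullet> b) *\<^sub>R (\<psi> (hyperplane_proj b w) - x)"

definition cone' :: "'a \<Rightarrow> 'a \<Rightarrow> 'a \<Rightarrow> 'a" where
  "cone' x w h = (h \<bullet> b) *\<^sub>R (\<psi> (hyperplane_proj b w) - x)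
     + (w \<bullet> b) *\<^sub>R \<psi>' (hyperplane_proj b w) (hyperplane_proj b h)"

lemma cone_has_derivative:
  assumes "hyperplane_proj b w \<in> V"
  shows "(cone x has_derivative cone' x w) (at w)"
proof -
  have proj: "(hyperplane_proj b has_derivative hyperplane_proj b) (at w)"
    unfolding hyperplane_proj_def[abs_def] by (auto intro!: derivative_eq_intros)
  have "((\<lambda>w. \<psi> (hyperplane_proj b w)) has_derivative
      (\<lambda>h. \<psi>' (hyperplane_proj b w) (hyperplane_proj b h))) (at w)"
    using diff_chain_at[OF proj \<psi>_deriv[OF assms]] by (simp add: o_def)
  then show ?thesis
    unfolding cone_def[abs_def] cone'_def[abs_def]
    by (auto intro!: derivative_eq_intros simp: algebra_simps)
qed

lemma negligible_critical_values:
  "negligible (cone x ` {w. hyperplane_proj b w \<in> V \<and> \<not> inj (cone' x w)})"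
  by (rule baby_Sard_euclidean[where f'="cone' x"])
    (auto intro: has_derivative_at_withinI cone_has_derivative)

lemma hyperplane_proj_chart_point:
  "y \<in> U \<inter> \<Theta> \<Longrightarrow> hyperplane_proj b (\<phi> y + c *\<^sub>R b) = \<phi> y"
  using flat b_unit by (simp add: hyperplane_proj_def inner_add_left)

lemma cone_chart_point:
  assumes "y \<in> U \<inter> \<Theta>"
  shows "cone x (\<phi> y + c *\<^sub>R b) = x + c *\<^sub>R (y - x)"
proof -
  have "(\<phi> y + c *\<^sub>R b) \<bullet> b = c"
    using flat[OF assms] b_unit by (simp add: inner_add_left)
  then show ?thesis using assms by (simp add: cone_def hyperplane_proj_chart_point \<psi>_\<phi>)
qed

lemma islimpt_chart_parameters:
  assumes "x + s0 *\<^sub>R (z - x) \<in> U" and "x + s0 *\<^sub>R (z - x) islimpt (closed_segment x z \<inter> \<Theta>)"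
  shows "s0 islimpt {s. x + s *\<^sub>R (z - x) \<in> U \<inter> \<Theta>}"
proof -
  have "x + s0 *\<^sub>R (z - x) islimpt (closed_segment x z \<inter> (U \<inter> \<Theta>))"
    using islimpt_Int_eventually[OF assms(2) eventually_at_in_open'[OF open_U assms(1)]]
    by (simp add: Int_ac)
  then show ?thesis
    by (rule islimpt_segment_parameter)
qed

lemma limit_point_at_base:
  assumes x: "x \<in> U \<inter> \<Theta>" and limpt: "x islimpt (closed_segment x z \<inter> \<Theta>)"
  shows "\<phi>' x (z - x) \<bullet> b = 0"
proof -
  define g where "g s = \<phi> (x + s *\<^sub>R (z - x)) \<bullet> b" for s
  have lin: "linear (\<phi>' x)" using \<phi>_deriv x has_derivative_linear by blast
  have "((\<lambda>s. x + s *\<^sub>R (z - x)) has_derivative (\<lambda>h. h *\<^sub>R (z - x))) (at 0)"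
    by (auto intro!: derivative_eq_intros)
  moreover have "(\<phi> has_derivative \<phi>' x) (at ((\<lambda>s. x + s *\<^sub>R (z - x)) 0))"
    using \<phi>_deriv x by simp
  ultimately have "((\<lambda>s. \<phi> (x + s *\<^sub>R (z - x))) has_derivative (\<lambda>h. \<phi>' x (h *\<^sub>R (z - x)))) (at 0)"
    using diff_chain_at by (fastforce simp: o_def)
  then have "(g has_derivative (*) (\<phi>' x (z - x) \<bullet> b)) (at 0)"
    unfolding g_def[abs_def]
    by (auto intro!: derivative_eq_intros simp: linear_cmul[OF lin])
  then have deriv: "(g has_real_derivative \<phi>' x (z - x) \<bullet> b) (at 0)"
    by (simp add: has_field_derivative_def)
  have "0 islimpt {s. x + s *\<^sub>R (z - x) \<in> U \<inter> \<Theta>}"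
    using x limpt by (intro islimpt_chart_parameters) simp_all
  moreover have "{s. x + s *\<^sub>R (z - x) \<in> U \<inter> \<Theta>} \<subseteq> {s. g s = g 0}"
    using flat x by (auto simp: g_def)
  ultimately show ?thesis
    using DERIV_zero_if_islimpt_fibre[OF deriv] islimpt_subset by blast
qed

text \<open>The chart point of x + s (z - x), lifted to height 1 / s so that the cone with apex x
  maps it back to z.\<close>

definition cone_lift :: "'a \<Rightarrow> 'a \<Rightarrow> real \<Rightarrow> 'a" where
  "cone_lift x z s = hyperplane_proj b (\<phi> (x + s *\<^sub>R (z - x))) + (1 / s) *\<^sub>R b"

lemma cone_lift_chart_point:
  "x + s *\<^sub>R (z - x) \<in> U \<inter> \<Theta> \<Longrightarrow> cone_lift x z s = \<phi> (x + s *\<^sub>R (z - x)) + (1 / s) *\<^sub>R b"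
  using flat by (simp add: cone_lift_def hyperplane_proj_id)

lemma cone_cone_lift:
  "x + s *\<^sub>R (z - x) \<in> U \<inter> \<Theta> \<Longrightarrow> s \<noteq> 0 \<Longrightarrow> cone x (cone_lift x z s) = z"
  by (simp add: cone_lift_chart_point cone_chart_point)

lemma inner_cone_lift: "cone_lift x z s \<bullet> b = 1 / s"
  using inner_hyperplane_proj[OF b_unit] b_unit by (simp add: cone_lift_def inner_add_left)

lemma isCont_cone_lift:
  assumes "x + s0 *\<^sub>R (z - x) \<in> U" and "s0 \<noteq> 0"
  shows "isCont (cone_lift x z) s0"
proof -
  have "isCont \<phi> (x + s0 *\<^sub>R (z - x))"
    using assms(1) \<phi>_deriv has_derivative_continuous by blast
  moreover have "isCont (\<lambda>s. x + s *\<^sub>R (z - x)) s0"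
    by (intro continuous_intros)
  ultimately have "isCont (\<lambda>s. \<phi> (x + s *\<^sub>R (z - x))) s0"
    using isCont_o2 by blast
  then show ?thesis
    unfolding cone_lift_def[abs_def] hyperplane_proj_def using assms(2)
    by (intro continuous_intros) auto
qed

lemma critical_value_if_limit_point:
  assumes q: "x + s0 *\<^sub>R (z - x) \<in> U \<inter> \<Theta>" and "s0 \<noteq> 0"
    and limpt: "x + s0 *\<^sub>R (z - x) islimpt (closed_segment x z \<inter> \<Theta>)"
  shows "z \<in> cone x ` {w. hyperplane_proj b w \<in> V \<and> \<not> inj (cone' x w)}"
proof -
  define S where "S = {s. x + s *\<^sub>R (z - x) \<in> U \<inter> \<Theta>} \<inter> - {0}"
  have "s0 islimpt {s. x + s *\<^sub>R (z - x) \<in> U \<inter> \<Theta>}"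
    using q limpt by (intro islimpt_chart_parameters) auto
  then have "s0 islimpt S"
    unfolding S_def using \<open>s0 \<noteq> 0\<close> by (intro islimpt_Int_eventually eventually_at_in_open') auto
  moreover have "isCont (cone_lift x z) s0"
    using q \<open>s0 \<noteq> 0\<close> by (intro isCont_cone_lift) auto
  moreover have "\<forall>\<^sub>F s in at s0. cone_lift x z s \<noteq> cone_lift x z s0"
  proof -
    have "cone_lift x z s \<noteq> cone_lift x z s0" if "s \<noteq> s0" for s
      using that \<open>s0 \<noteq> 0\<close> inner_cone_lift by (metis divide_cancel_left zero_neq_one)
    then show ?thesis
      unfolding eventually_at_filter by simp
  qed
  ultimately have "cone_lift x z s0 islimpt cone_lift x z ` S"
    by (rule islimpt_isCont_image)
  moreover have "cone_lift x z ` S \<subseteq> {w. cone x w = cone x (cone_lift x z s0)}"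
    using q \<open>s0 \<noteq> 0\<close> by (auto simp: S_def cone_cone_lift)
  ultimately have "cone_lift x z s0 islimpt {w. cone x w = cone x (cone_lift x z s0)}"
    by (rule islimpt_subset)
  moreover have proj: "hyperplane_proj b (cone_lift x z s0) \<in> V"
    using q \<phi>_into by (simp add: cone_lift_chart_point hyperplane_proj_chart_point)
  ultimately have "\<not> inj (cone' x (cone_lift x z s0))"
    using has_derivative_inj_not_islimpt_fibre[OF cone_has_derivative] by blast
  then show ?thesis
    using proj cone_cone_lift[OF q \<open>s0 \<noteq> 0\<close>] by (intro image_eqI[of _ _ "cone_lift x z s0"]) auto
qed

lemma negligible_segment_limit_points:
  "negligible {z. \<exists>q \<in> closed_segment x z \<inter> \<Theta> \<inter> U. q islimpt (closed_segment x z \<inter> \<Theta>)}"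
proof -
  define base where "base = (if x \<in> U then {z. \<phi>' x (z - x) \<bullet> b = 0} else {})"
  have "negligible base"
  proof (cases "x \<in> U")
    case True
    then show ?thesis
      using negligible_preimage_hyperplane[OF has_derivative_linear[OF \<phi>_deriv] surj_\<phi>']
        nonzero_Basis[OF b_Basis] by (simp add: base_def)
  qed (simp add: base_def)
  moreover have "z \<in> cone x ` {w. hyperplane_proj b w \<in> V \<and> \<not> inj (cone' x w)} \<union> base"
    if "q \<in> closed_segment x z \<inter> \<Theta> \<inter> U" "q islimpt (closed_segment x z \<inter> \<Theta>)" for z q
  proof -
    have "q \<in> closed_segment x z" using that(1) by blast
    then obtain s0 where q: "q = x + s0 *\<^sub>R (z - x)"
      by (rule closed_segment_line_point)
    show ?thesis
    proof (cases "s0 = 0")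
      case True
      then show ?thesis
        using that limit_point_at_base[of x z] q by (auto simp: base_def)
    next
      case False
      then show ?thesis
        using that critical_value_if_limit_point[of x s0 z] q by auto
    qed
  qed
  ultimately show ?thesis
    by (blast intro: negligible_subset negligible_Un negligible_critical_values)
qed

end

lemma Ck_hypersurface_flattening_chart:
  assumes "Ck_hypersurface (Suc k) \<Theta>" "p \<in> \<Theta>"
  shows "\<exists>U V \<phi> \<psi> \<phi>' \<psi>' b. p \<in> U \<and> flattening_chart \<Theta> U V \<phi> \<psi> \<phi>' \<psi>' b"
proof -
  obtain U V \<phi> b where "p \<in> U" and diffeo: "Ck_diffeo (Suc k) U V \<phi>" and "b \<in> Basis"
      and flat: "\<phi> ` (U \<inter> \<Theta>) = V \<inter> {z. z \<bullet> b = 0}"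
    using assms unfolding Ck_hypersurface_def by blast
  obtain \<psi> where "open U" and \<phi>: "Ck_on (Suc k) U \<phi>" and \<psi>: "Ck_on (Suc k) V \<psi>"
      and "\<phi> ` U = V" and "\<forall>u\<in>U. \<psi> (\<phi> u) = u"
    using diffeo unfolding Ck_diffeo_def by blast
  obtain \<phi>' where "\<forall>u\<in>U. (\<phi> has_derivative \<phi>' u) (at u)"
    using \<phi> by (simp only: Ck_on.simps) blast
  moreover obtain \<psi>' where "\<forall>v\<in>V. (\<psi> has_derivative \<psi>' v) (at v)"
    using \<psi> by (simp only: Ck_on.simps) blast
  ultimately have "flattening_chart \<Theta> U V \<phi> \<psi> \<phi>' \<psi>' b"
    using \<open>open U\<close> \<open>\<phi> ` U = V\<close> \<open>\<forall>u\<in>U. \<psi> (\<phi> u) = u\<close> \<open>b \<in> Basis\<close> flat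
    by unfold_locales blast+
  with \<open>p \<in> U\<close> show ?thesis by blast
qed

lemma negligible_infinite_segment_intersections:
  fixes \<Theta> :: "'a::euclidean_space set"
  assumes "closed \<Theta>"
    and charts: "\<And>p. p \<in> \<Theta> \<Longrightarrow> \<exists>U V \<phi> \<psi> \<phi>' \<psi>' b. p \<in> U \<and> flattening_chart \<Theta> U V \<phi> \<psi> \<phi>' \<psi>' b"
  shows "negligible {z. infinite (closed_segment x z \<inter> \<Theta>)}"
proof -
  define \<F> where "\<F> = {U. \<exists>V \<phi> \<psi> \<phi>' \<psi>' b. flattening_chart \<Theta> U V \<phi> \<psi> \<phi>' \<psi>' b}"
  define bad where "bad U = {z. \<exists>q \<in> closed_segment x z \<inter> \<Theta> \<inter> U. q islimpt (closed_segment x z \<inter> \<Theta>)}" for U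
  have "open U" if "U \<in> \<F>" for U
    using that flattening_chart.open_U unfolding \<F>_def by blast
  then obtain \<F>' where "\<F>' \<subseteq> \<F>" "countable \<F>'" "\<Union>\<F>' = \<Union>\<F>"
    using Lindelof by metis
  have "negligible (bad U)" if "U \<in> \<F>" for U
    using that flattening_chart.negligible_segment_limit_points unfolding \<F>_def bad_def by blast
  then have "negligible (\<Union>U\<in>\<F>'. bad U)"
    using \<open>\<F>' \<subseteq> \<F>\<close> \<open>countable \<F>'\<close> by (intro negligible_countable_Union) auto
  moreover have "{z. infinite (closed_segment x z \<inter> \<Theta>)} \<subseteq> (\<Union>U\<in>\<F>'. bad U)"
  proof
    fix z assume "z \<in> {z. infinite (closed_segment x z \<inter> \<Theta>)}"
    moreover have "compact (closed_segment x z \<inter> \<Theta>)"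
      by (intro compact_Int_closed compact_segment \<open>closed \<Theta>\<close>)
    ultimately obtain q where q: "q \<in> closed_segment x z \<inter> \<Theta>" "q islimpt (closed_segment x z \<inter> \<Theta>)"
      unfolding compact_eq_Bolzano_Weierstrass by blast
    then obtain U where "U \<in> \<F>'" "q \<in> U"
      using charts \<open>\<Union>\<F>' = \<Union>\<F>\<close> unfolding \<F>_def by blast
    then show "z \<in> (\<Union>U\<in>\<F>'. bad U)"
      using q unfolding bad_def by blast
  qed
  ultimately show ?thesis
    by (rule negligible_subset)
qed

lemma curve_length_le_lipschitz:
  fixes \<gamma> :: "real \<Rightarrow> 'a::real_normed_vector"
  assumes lip: "L-lipschitz_on {0..1} \<gamma>"
  shows "curve_length \<gamma> \<le> ereal L"
  unfolding curve_length_def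
proof (rule SUP_least, clarify)
  fix n and t :: "nat \<Rightarrow> real"
  assume t0: "t 0 = 0" and tn: "t n = 1" and step: "\<forall>k<n. t k \<le> t (Suc k)"
  have mono: "t i \<le> t j" if "i \<le> j" "j \<le> n" for i j
    using that by (induction j rule: dec_induct) (auto intro: order.trans[OF _ step[rule_format]])
  have range: "t k \<in> {0..1}" if "k \<le> n" for k
    using mono[of 0 k] mono[of k n] that t0 tn by auto
  have "(\<Sum>k\<in>{1..n}. norm (\<gamma> (t k) - \<gamma> (t (k - 1)))) \<le> (\<Sum>k\<in>{1..n}. L * (t k - t (k - 1)))"
  proof (rule sum_mono)
    fix k assume "k \<in> {1..n}"
    then have "t (k - 1) \<le> t k" and "k \<le> n" using mono[of "k - 1" k] by auto
    then show "norm (\<gamma> (t k) - \<gamma> (t (k - 1))) \<le> L * (t k - t (k - 1))"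
      using lipschitz_onD[OF lip range range, of k "k - 1"] by (simp add: dist_norm dist_real_def)
  qed
  also have "\<dots> = L * (\<Sum>k<n. t (Suc k) - t k)"
    using sum_bounds_lt_plus1[of "\<lambda>k. t k - t (k - 1)" n] by (simp add: sum_distrib_left)
  also have "\<dots> = L"
    by (simp add: sum_lessThan_telescope t0 tn)
  finally show "ereal (\<Sum>k\<in>{1..n}. norm (\<gamma> (t k) - \<gamma> (t (k - 1)))) \<le> ereal L"
    by simp
qed

lemma lipschitz_on_linepath: "(dist a b)-lipschitz_on S (linepath a b)"
proof (rule lipschitz_onI)
  fix s t
  have "linepath a b s - linepath a b t = (s - t) *\<^sub>R (b - a)"
    by (simp add: linepath_def algebra_simps)
  then show "dist (linepath a b s) (linepath a b t) \<le> dist a b * dist s t"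
    by (simp add: dist_norm dist_real_def norm_minus_commute)
qed simp

lemma lipschitz_on_joinpaths:
  assumes g1: "L-lipschitz_on {0..1} g1" and g2: "L-lipschitz_on {0..1} g2"
    and "pathfinish g1 = pathstart g2"
  shows "(2 * L)-lipschitz_on {0..1} (g1 +++ g2)"
proof -
  have double: "2-lipschitz_on S (\<lambda>s. 2 * s + c)" for S and c :: real
    by (rule lipschitz_onI) (simp_all add: dist_real_def abs_if)
  have "(L * 2)-lipschitz_on {0..1/2} (\<lambda>s. g1 (2 * s + 0))"
    by (rule lipschitz_on_compose2[OF double lipschitz_on_subset[OF g1]]) auto
  moreover have "(L * 2)-lipschitz_on {1/2..1} (\<lambda>s. g2 (2 * s + -1))"
    by (rule lipschitz_on_compose2[OF double lipschitz_on_subset[OF g2]]) auto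
  ultimately have "(L * 2)-lipschitz_on {0..1} (\<lambda>s. if s \<le> 1/2 then g1 (2 * s) else g2 (2 * s - 1))"
    using assms(3) by (intro lipschitz_on_concat) (auto simp: pathfinish_def pathstart_def)
  then show ?thesis
    by (simp add: joinpaths_def[abs_def] mult.commute)
qed

lemma curve_length_broken_line:
  "curve_length (linepath x z +++ linepath z y) \<le> ereal (dist x y + 2 * dist (midpoint x y) z)"
proof -
  define M where "M = dist x y / 2 + dist (midpoint x y) z"
  have "dist x z \<le> M" "dist z y \<le> M"
    using dist_triangle[of x z "midpoint x y"] dist_triangle[of z y "midpoint x y"]
    by (simp_all add: M_def dist_midpoint dist_commute)
  then have "(2 * M)-lipschitz_on {0..1} (linepath x z +++ linepath z y)"
    by (intro lipschitz_on_joinpaths lipschitz_on_mono[OF lipschitz_on_linepath]) auto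
  then show ?thesis
    using curve_length_le_lipschitz by (simp add: M_def)
qed

lemma closed_if_nearest_points:
  assumes "\<epsilon> > 0" and nearest: "\<And>x. infdist x \<Theta> < \<epsilon> \<Longrightarrow> \<exists>p\<in>\<Theta>. dist x p = infdist x \<Theta>"
  shows "closed \<Theta>"
proof (cases "\<Theta> = {}")
  case False
  have "w \<in> \<Theta>" if "w \<in> closure \<Theta>" for w
    using that nearest[of w] \<open>\<epsilon> > 0\<close> False by (auto simp: in_closure_iff_infdist_zero)
  then show ?thesis using closure_subset_eq by blast
qed simp

theorem lemma3p13:
  fixes \<Theta> :: "'a::euclidean_space set"
  assumes "Ck_hypersurface 3 \<Theta>"
    and "\<epsilon>0 > 0"
    and "\<forall>x. infdist x \<Theta> < \<epsilon>0 \<longrightarrow> (\<exists>!p. p \<in> \<Theta> \<and> norm (x - p) = infdist x \<Theta>)"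
  shows "\<forall>x y (\<eta>::real). \<eta> > 0 \<longrightarrow>
           (\<exists>\<gamma>. path \<gamma> \<and> pathstart \<gamma> = x \<and> pathfinish \<gamma> = y \<and>
                 curve_length \<gamma> < ereal (norm (x - y) + \<eta>) \<and>
                 finite (path_image \<gamma> \<inter> \<Theta>))"
proof (intro allI impI)
  fix x y :: 'a and \<eta> :: real
  assume "\<eta> > 0"
  have "closed \<Theta>"
    using assms(2,3) by (intro closed_if_nearest_points[of \<epsilon>0]) (auto simp: dist_norm)
  moreover have "\<exists>U V \<phi> \<psi> \<phi>' \<psi>' b. p \<in> U \<and> flattening_chart \<Theta> U V \<phi> \<psi> \<phi>' \<psi>' b" if "p \<in> \<Theta>" for p
    using Ck_hypersurface_flattening_chart[of 2 \<Theta> p] assms(1) that by (simp add: numeral_3_eq_3)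
  ultimately have "negligible ({z. infinite (closed_segment x z \<inter> \<Theta>)} \<union> {z. infinite (closed_segment y z \<inter> \<Theta>)})"
    by (intro negligible_Un negligible_infinite_segment_intersections)
  moreover have "\<not> negligible (ball (midpoint x y) (\<eta> / 4))"
    using \<open>\<eta> > 0\<close> by (intro open_not_negligible) auto
  ultimately obtain z where z: "dist (midpoint x y) z < \<eta> / 4"
      and fin: "finite (closed_segment x z \<inter> \<Theta>)" "finite (closed_segment y z \<inter> \<Theta>)"
    by (metis (mono_tags, lifting) Un_iff mem_Collect_eq mem_ball negligible_subset subsetI)
  have "curve_length (linepath x z +++ linepath z y) \<le> ereal (dist x y + 2 * dist (midpoint x y) z)"
    by (rule curve_length_broken_line)
  also have "\<dots> < ereal (norm (x - y) + \<eta>)"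
    using z \<open>\<eta> > 0\<close> by (simp add: dist_norm)
  finally have "curve_length (linepath x z +++ linepath z y) < ereal (norm (x - y) + \<eta>)" .
  moreover have "path_image (linepath x z +++ linepath z y) \<inter> \<Theta> =
      (closed_segment x z \<inter> \<Theta>) \<union> (closed_segment y z \<inter> \<Theta>)"
    by (auto simp: path_image_join closed_segment_commute)
  ultimately show "\<exists>\<gamma>. path \<gamma> \<and> pathstart \<gamma> = x \<and> pathfinish \<gamma> = y \<and>
      curve_length \<gamma> < ereal (norm (x - y) + \<eta>) \<and> finite (path_image \<gamma> \<inter> \<Theta>)"
    using fin by (intro exI[of _ "linepath x z +++ linepath z y"]) auto
qed

end
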